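(* Let $0<r_1<r_2<1$ be fixed and let $T:\mathrm{Hol}(\mathbb{D})\to\mathrm{Hol}(\mathbb{D})$ be a linear continuous operator such that for all $f\in\mathrm{Hol}(\mathbb{D})$ and $i\in\{1,2\}$, \[ \|Tf\|_{\infty,r_i}=\|f\|_{\infty,r_i},\qquad\text{where } \|f\|_{\infty,r}=\sup_{|z|\le r}|f(z)|. \] Then there exist $\alpha,\beta\in\mathbb{C}$ with $|\alpha|=|\beta|=1$ such that $(Tf)(z)=\alpha f(\beta z)$ for all $f\in\mathrm{Hol}(\mathbb{D})$ and $z\in\mathbb{D}$.
   Context: $\mathbb{D}$ is the open unit disc and $\mathrm{Hol}(\mathbb{D})$ the space of holomorphic functions on $\mathbb{D}$ with the topology of uniform convergence on compact subsets. *)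

theory Defs
  imports "HOL-Complex_Analysis.Complex_Analysis"
begin

text \<open>Elements of Hol(D) are represented by total functions complex => complex that are
holomorphic on the open unit disc ball 0 1; only their values on the disc matter.\<close>

definition hol_disc :: "(complex \<Rightarrow> complex) set" where
  "hol_disc = {f. f holomorphic_on ball 0 1}"

definition sup_norm_r :: "real \<Rightarrow> (complex \<Rightarrow> complex) \<Rightarrow> real" where
  "sup_norm_r r f = (SUP z\<in>cball 0 r. cmod (f z))"

definition hol_converges :: "(nat \<Rightarrow> complex \<Rightarrow> complex) \<Rightarrow> (complex \<Rightarrow> complex) \<Rightarrow> bool" where
  "hol_converges F f \<longleftrightarrow>
     (\<forall>K. compact K \<and> K \<subseteq> ball 0 1 \<longrightarrow> uniform_limit K F f sequentially)"

definition hol_linear :: "((complex \<Rightarrow> complex) \<Rightarrow> (complex \<Rightarrow> complex)) \<Rightarrow> bool" where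
  "hol_linear T \<longleftrightarrow>
     (\<forall>f\<in>hol_disc. T f \<in> hol_disc) \<and>
     (\<forall>f\<in>hol_disc. \<forall>g\<in>hol_disc. \<forall>a b. \<forall>z\<in>ball 0 1.
        T (\<lambda>w. a * f w + b * g w) z = a * T f z + b * T g z)"

text \<open>Continuity with respect to the (metrizable) topology of Hol(D), stated sequentially.\<close>
definition hol_continuous :: "((complex \<Rightarrow> complex) \<Rightarrow> (complex \<Rightarrow> complex)) \<Rightarrow> bool" where
  "hol_continuous T \<longleftrightarrow>
     (\<forall>F f. (\<forall>n. F n \<in> hol_disc) \<and> f \<in> hol_disc \<and> hol_converges F f
        \<longrightarrow> hol_converges (\<lambda>n. T (F n)) (T f))"

end

theory Submission
  imports Defs
begin

text \<open>
  Since \<open>T 1\<close> has sup norm \<open>1\<close> on both discs, the maximum modulus principle makes it a unimodular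
  constant \<open>\<alpha>\<close>. Testing \<open>T\<close> on \<open>1 + c z\<close> shows that the image of \<open>cball 0 r\<^sub>1\<close> under
  \<open>h = cnj \<alpha> \<cdot> T z\<close> contains the circle of radius \<open>r\<^sub>1\<close>, while \<open>h\<close> maps \<open>ball 0 r\<^sub>2\<close> into
  \<open>cball 0 r\<^sub>2\<close>; the Schwarz lemma then makes \<open>h\<close> a rotation \<open>z \<mapsto> \<beta> z\<close>.
  For \<open>|p| = r\<^sub>1\<close> the functional \<open>f \<mapsto> cnj \<alpha> \<cdot> T f (cnj \<beta> \<cdot> p)\<close> has norm at most one for the
  sup norm on \<open>cball 0 r\<^sub>1\<close> and agrees with evaluation at \<open>p\<close> on \<open>1\<close> and \<open>z\<close>, and a peak function
  at \<open>p\<close> shows that it is evaluation at \<open>p\<close>. So \<open>T f = \<alpha> \<cdot> f (\<beta> \<cdot> _)\<close> on the circle of radius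
  \<open>r\<^sub>1\<close>, hence on the whole disc by analytic continuation.
\<close>

lemma sup_norm_r_upper:
  assumes "continuous_on (cball 0 r) f" "z \<in> cball 0 r"
  shows "cmod (f z) \<le> sup_norm_r r f"
proof -
  have "compact ((\<lambda>z. cmod (f z)) ` cball 0 r)"
    by (intro compact_continuous_image continuous_intros assms compact_cball)
  then show ?thesis
    unfolding sup_norm_r_def
    by (intro cSUP_upper assms(2) bounded_imp_bdd_above compact_imp_bounded)
qed

lemma sup_norm_r_least:
  assumes "0 \<le> r" "\<And>z. z \<in> cball 0 r \<Longrightarrow> cmod (f z) \<le> B"
  shows "sup_norm_r r f \<le> B"
  unfolding sup_norm_r_def using assms by (intro cSUP_least) auto

lemma sup_norm_r_attained:
  assumes "0 \<le> r" "continuous_on (cball 0 r) f"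
  obtains z where "z \<in> cball 0 r" "cmod (f z) = sup_norm_r r f"
proof -
  have "continuous_on (cball 0 r) (\<lambda>z. cmod (f z))"
    by (intro continuous_intros assms)
  then obtain z where z: "z \<in> cball 0 r" "\<And>w. w \<in> cball 0 r \<Longrightarrow> cmod (f w) \<le> cmod (f z)"
    using continuous_attains_sup[of "cball 0 r" "\<lambda>z. cmod (f z)"] assms by auto
  then have "sup_norm_r r f = cmod (f z)"
    using assms by (intro antisym sup_norm_r_least sup_norm_r_upper) auto
  with z that show ?thesis by simp
qed

lemma sup_norm_r_cong_norm:
  assumes "\<And>z. z \<in> cball 0 r \<Longrightarrow> cmod (f z) = cmod (g z)"
  shows "sup_norm_r r f = sup_norm_r r g"
  unfolding sup_norm_r_def using assms by (intro SUP_cong) auto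

lemma sup_norm_r_const: "0 \<le> r \<Longrightarrow> sup_norm_r r (\<lambda>_. c) = cmod c"
  by (simp add: sup_norm_r_def)

lemma sup_norm_r_id_le: "0 \<le> r \<Longrightarrow> sup_norm_r r (\<lambda>z. z) \<le> r"
  by (rule sup_norm_r_least) simp_all

lemma continuous_on_cball_if_holomorphic_on_disc:
  assumes "f holomorphic_on ball 0 1" "r < 1"
  shows "continuous_on (cball 0 r) f"
  using assms by (intro holomorphic_on_imp_continuous_on holomorphic_on_subset[OF assms(1)]) auto

lemma norm_diff_le_sup_norm_r_deriv:
  assumes f: "f holomorphic_on ball 0 1" and r: "r < 1" and zw: "z \<in> cball 0 r" "w \<in> cball 0 r"
  shows "cmod (f z - f w) \<le> sup_norm_r r (deriv f) * cmod (z - w)"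
proof (rule field_differentiable_bound[OF convex_cball _ _ zw])
  show "(f has_field_derivative deriv f x) (at x within cball 0 r)" if "x \<in> cball 0 r" for x
  proof (rule has_field_derivative_at_within[OF holomorphic_derivI[OF f open_ball]])
    show "x \<in> ball 0 1" using r that by simp
  qed
  have "deriv f holomorphic_on ball 0 1" using f by (rule holomorphic_deriv) simp
  then have "continuous_on (cball 0 r) (deriv f)"
    using r by (rule continuous_on_cball_if_holomorphic_on_disc)
  then show "cmod (deriv f x) \<le> sup_norm_r r (deriv f)" if "x \<in> cball 0 r" for x
    using that by (rule sup_norm_r_upper)
qed

lemma holomorphic_on_disc_compose_mult:
  assumes "f holomorphic_on ball 0 1" "cmod c \<le> 1"
  shows "(\<lambda>z. f (c * z)) holomorphic_on ball 0 1"
proof -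
  have "cmod (c * z) < 1" if "cmod z < 1" for z
    using assms(2) that by (simp add: norm_mult mult_le_one le_less_trans[OF mult_left_le_one_le])
  then have "(f \<circ> (\<lambda>z. c * z)) holomorphic_on ball 0 1"
    by (intro holomorphic_on_compose_gen[OF _ assms(1)] holomorphic_intros) auto
  then show ?thesis by (simp add: o_def)
qed

lemma holomorphic_eq_on_disc_if_eq_on_sphere:
  assumes "f holomorphic_on ball 0 1" "g holomorphic_on ball 0 1" "0 < r" "r < 1"
    and "\<And>z. cmod z = r \<Longrightarrow> f z = g z" and "z \<in> ball 0 1"
  shows "f z = g z"
proof -
  have "sphere 0 r \<noteq> {w}" for w :: complex
  proof
    assume S: "sphere 0 r = {w}"
    have "complex_of_real r \<in> sphere 0 r" "- complex_of_real r \<in> sphere 0 r"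
      using assms(3) by auto
    then have "complex_of_real r = - complex_of_real r" unfolding S by simp
    then show False using assms(3) by (simp add: complex_eq_iff)
  qed
  then have lim: "complex_of_real r islimpt sphere 0 r"
    using assms(3) by (intro connected_imp_perfect connected_sphere) auto
  have "f z - g z = 0"
  proof (rule analytic_continuation[of "\<lambda>z. f z - g z" "ball 0 1" "sphere 0 r" r])
    show "(\<lambda>z. f z - g z) holomorphic_on ball 0 1"
      using assms(1,2) by (intro holomorphic_intros)
  qed (use assms(3-6) lim in auto)
  then show ?thesis by simp
qed

lemma constant_on_disc_if_sup_norm_r_eq:
  assumes g: "g holomorphic_on ball 0 1" and r: "0 \<le> r1" "r1 < r2" "r2 < 1"
    and eq: "sup_norm_r r1 g = sup_norm_r r2 g"
  shows "g constant_on ball 0 1"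
proof -
  have "continuous_on (cball 0 r1) g"
    using r by (intro continuous_on_cball_if_holomorphic_on_disc[OF g]) simp
  then obtain w where w: "w \<in> cball 0 r1" "cmod (g w) = sup_norm_r r1 g"
    by (rule sup_norm_r_attained[OF r(1)])
  show ?thesis
  proof (rule maximum_modulus_principle[OF g, of "ball 0 r2" w])
    fix z :: complex assume "z \<in> ball 0 r2"
    then have "cmod (g z) \<le> sup_norm_r r2 g"
      using r by (intro sup_norm_r_upper continuous_on_cball_if_holomorphic_on_disc[OF g]) auto
    then show "cmod (g z) \<le> cmod (g w)" using w eq by simp
  qed (use w r in \<open>auto intro: convex_connected convex_ball\<close>)
qed

lemma holomorphic_self_map_into_ball:
  assumes hol: "\<phi> holomorphic_on ball 0 1" and into: "\<phi> ` ball 0 1 \<subseteq> cball 0 1"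
    and nonconst: "\<not> \<phi> constant_on ball 0 1"
  shows "\<phi> ` ball 0 1 \<subseteq> ball 0 1"
proof clarify
  fix z :: complex assume z: "z \<in> ball 0 1"
  show "\<phi> z \<in> ball 0 1"
  proof (rule ccontr)
    assume "\<phi> z \<notin> ball 0 1"
    then have "cmod (\<phi> w) \<le> cmod (\<phi> z)" if "w \<in> ball 0 1" for w
      using into that by fastforce
    then have "\<phi> constant_on ball 0 1"
      using z by (intro maximum_modulus_principle[OF hol, of "ball 0 1" z]) auto
    with nonconst show False ..
  qed
qed

lemma norm_Moebius_function_opposite:
  assumes s: "cmod s = 1" and "0 \<le> m" "0 \<le> \<rho>"
  shows "cmod (Moebius_function 0 (m * s) (- (\<rho> * s))) = (\<rho> + m) / (1 + \<rho> * m)"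
proof -
  have "cnj s * s = 1" using s complex_norm_square[of s] by (simp add: mult.commute)
  moreover have "cnj (m * s) * (- (\<rho> * s)) = - (\<rho> * m) * (cnj s * s)" by (simp add: algebra_simps)
  ultimately have den: "1 - cnj (m * s) * (- (\<rho> * s)) = of_real (1 + \<rho> * m)" by simp
  have num: "- (\<rho> * s) - m * s = - of_real (\<rho> + m) * s" by (simp add: algebra_simps)
  have "0 \<le> \<rho> * m" using assms by simp
  then show ?thesis
    unfolding Moebius_function_simple num den
    using assms by (simp add: norm_divide norm_mult del: of_real_add)
qed

text \<open>If \<open>\<phi> 0 = a \<noteq> 0\<close>, compose \<open>\<phi>\<close> with the Moebius map sending \<open>a\<close> to \<open>0\<close>. A preimage
  \<open>u \<in> cball 0 \<rho>\<close> of \<open>-\<rho> a / \<bar>a\<bar>\<close> is then sent to modulus \<open>(\<rho> + \<bar>a\<bar>) / (1 + \<rho> \<bar>a\<bar>) > \<rho>\<close>,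
  contradicting the Schwarz lemma.\<close>
lemma holomorphic_self_map_zero_if_sphere_in_image:
  assumes hol: "\<phi> holomorphic_on ball 0 1" and into: "\<phi> ` ball 0 1 \<subseteq> ball 0 1"
    and \<rho>: "0 < \<rho>" "\<rho> < 1" and sphere: "sphere 0 \<rho> \<subseteq> \<phi> ` cball 0 \<rho>"
  shows "\<phi> 0 = 0"
proof (rule ccontr)
  define a where "a = \<phi> 0"
  define m where "m = cmod a"
  define s where "s = a / m"
  assume "\<phi> 0 \<noteq> 0"
  then have m0: "0 < m" and s: "cmod s = 1" and as: "a = m * s"
    by (simp_all add: a_def m_def s_def norm_divide)
  have "a \<in> ball 0 1" unfolding a_def by (rule subsetD[OF into]) simp
  then have a1: "cmod a < 1" by simp
  have "- (\<rho> * s) \<in> \<phi> ` cball 0 \<rho>"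
    using s \<rho> by (intro subsetD[OF sphere]) (simp add: norm_mult)
  then obtain u where u: "u \<in> cball 0 \<rho>" "\<phi> u = - (\<rho> * s)"
    by (metis imageE)
  define \<psi> where "\<psi> = Moebius_function 0 a \<circ> \<phi>"
  have "cmod (\<psi> u) \<le> cmod u"
  proof (rule Schwarz_Lemma(1))
    show "\<psi> holomorphic_on ball 0 1" unfolding \<psi>_def
      by (rule holomorphic_on_compose_gen[OF hol Moebius_function_holomorphic[OF a1] into])
    show "\<psi> 0 = 0" by (simp add: \<psi>_def a_def Moebius_function_eq_zero)
    show "cmod (\<psi> z) < 1" if "cmod z < 1" for z
      unfolding \<psi>_def o_def using into that
      by (intro Moebius_function_norm_lt_1 a1) (auto simp: image_subset_iff)
    show "cmod u < 1" using u \<rho> by simp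
  qed
  also have "\<dots> \<le> \<rho>" using u(1) by simp
  finally have le: "cmod (\<psi> u) \<le> \<rho>" .
  have "cmod (\<psi> u) = (\<rho> + m) / (1 + \<rho> * m)"
    using s \<rho> m0 by (simp add: \<psi>_def as u(2) norm_Moebius_function_opposite)
  moreover have "0 < 1 + \<rho> * m" using \<rho> m0 by (simp add: add_pos_pos)
  ultimately have "\<rho> + m \<le> \<rho> * (1 + \<rho> * m)"
    using le by (simp add: pos_divide_le_eq)
  then have "m * (1 - \<rho> * \<rho>) \<le> 0" by (simp add: algebra_simps)
  moreover have "\<rho> * \<rho> < 1 * 1" using \<rho> by (intro mult_strict_mono) auto
  then have "0 < m * (1 - \<rho> * \<rho>)" using m0 by simp
  ultimately show False by simp
qed

lemma holomorphic_self_map_rotation_if_sphere_in_image: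
  assumes hol: "\<phi> holomorphic_on ball 0 1" and into: "\<phi> ` ball 0 1 \<subseteq> cball 0 1"
    and \<rho>: "0 < \<rho>" "\<rho> < 1" and sphere: "sphere 0 \<rho> \<subseteq> \<phi> ` cball 0 \<rho>"
  obtains b where "cmod b = 1" "\<And>z. z \<in> ball 0 1 \<Longrightarrow> \<phi> z = b * z"
proof -
  have img: "complex_of_real \<rho> \<in> \<phi> ` cball 0 \<rho>" "- complex_of_real \<rho> \<in> \<phi> ` cball 0 \<rho>"
    by (rule subsetD[OF sphere], use \<rho> in simp)+
  obtain u where u: "\<phi> u = complex_of_real \<rho>" "u \<in> cball 0 \<rho>"
    using img(1) by auto
  obtain v where v: "\<phi> v = - complex_of_real \<rho>" "v \<in> cball 0 \<rho>"
    using img(2) by auto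
  have "\<not> \<phi> constant_on ball 0 1"
  proof
    assume "\<phi> constant_on ball 0 1"
    then obtain c where c: "\<And>x. x \<in> ball 0 1 \<Longrightarrow> \<phi> x = c"
      unfolding constant_on_def by blast
    have "u \<in> ball 0 1" "v \<in> ball 0 1" using u v \<rho> by auto
    then have "\<phi> u = \<phi> v" using c by simp
    then have "complex_of_real \<rho> = - complex_of_real \<rho>" using u(1) v(1) by metis
    with \<rho> show False by (simp add: complex_eq_iff)
  qed
  then have into_ball: "\<phi> ` ball 0 1 \<subseteq> ball 0 1"
    by (rule holomorphic_self_map_into_ball[OF hol into])
  have \<phi>0: "\<phi> 0 = 0"
    by (rule holomorphic_self_map_zero_if_sphere_in_image[OF hol into_ball \<rho> sphere])
  have lt1: "cmod (\<phi> z) < 1" if "cmod z < 1" for z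
    using into_ball that by (auto simp: image_subset_iff)
  have u1: "cmod u < 1" using u \<rho> by simp
  have "cmod (\<phi> u) \<le> cmod u" by (rule Schwarz_Lemma(1)[OF hol \<phi>0 lt1 u1])
  then have "cmod u < 1 \<and> u \<noteq> 0 \<and> cmod (\<phi> u) = cmod u"
    using u u1 \<rho> \<phi>0 by auto
  then have "\<exists>b. (\<forall>z. cmod z < 1 \<longrightarrow> \<phi> z = b * z) \<and> cmod b = 1"
    by (intro Schwarz_Lemma(3)[OF hol \<phi>0 lt1 u1] disjI1 exI[of _ u])
  then obtain b where b: "\<forall>z. cmod z < 1 \<longrightarrow> \<phi> z = b * z" "cmod b = 1"
    by (elim exE conjE)
  show ?thesis by (rule that[OF b(2)]) (use b(1) in simp)
qed

lemma holomorphic_map_rotation_if_sphere_in_image: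
  assumes hol: "h holomorphic_on ball 0 R" and into: "h ` ball 0 R \<subseteq> cball 0 R"
    and \<rho>: "0 < \<rho>" "\<rho> < R" and sphere: "sphere 0 \<rho> \<subseteq> h ` cball 0 \<rho>"
  obtains b where "cmod b = 1" "\<And>z. z \<in> ball 0 R \<Longrightarrow> h z = b * z"
proof -
  define \<phi> where "\<phi> u = h (R * u) / R" for u :: complex
  have R: "0 < R" using \<rho> by simp
  have "(\<lambda>u. complex_of_real R * u) ` ball 0 1 \<subseteq> ball 0 R" using R by (auto simp: norm_mult)
  then have "(h \<circ> (\<lambda>u. complex_of_real R * u)) holomorphic_on ball 0 1"
    by (intro holomorphic_on_compose_gen[OF _ hol] holomorphic_intros)
  then have \<phi>_hol: "\<phi> holomorphic_on ball 0 1"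
    unfolding \<phi>_def using R by (intro holomorphic_intros) (simp_all add: o_def)
  have \<phi>_into: "\<phi> ` ball 0 1 \<subseteq> cball 0 1"
    using into R by (force simp: \<phi>_def norm_divide norm_mult image_subset_iff)
  have \<phi>_sphere: "sphere 0 (\<rho> / R) \<subseteq> \<phi> ` cball 0 (\<rho> / R)"
  proof
    fix y :: complex assume "y \<in> sphere 0 (\<rho> / R)"
    then have "R * y \<in> h ` cball 0 \<rho>" using R by (intro subsetD[OF sphere]) (simp add: norm_mult)
    then obtain w where w: "w \<in> cball 0 \<rho>" "h w = R * y" by auto
    then have "\<phi> (w / R) = y" using R by (simp add: \<phi>_def)
    moreover have "w / R \<in> cball 0 (\<rho> / R)" using w R by (simp add: norm_divide divide_right_mono)
    ultimately show "y \<in> \<phi> ` cball 0 (\<rho> / R)" by (metis image_eqI)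
  qed
  obtain b where b: "cmod b = 1" "\<And>u. u \<in> ball 0 1 \<Longrightarrow> \<phi> u = b * u"
    by (rule holomorphic_self_map_rotation_if_sphere_in_image[OF \<phi>_hol \<phi>_into _ _ \<phi>_sphere])
      (use \<rho> in simp_all)
  show ?thesis
  proof (rule that[OF b(1)])
    fix z :: complex assume "z \<in> ball 0 R"
    then have "\<phi> (z / R) = b * (z / R)" using R by (intro b(2)) (simp add: norm_divide)
    then show "h z = b * z" using R by (simp add: \<phi>_def field_simps)
  qed
qed

lemma cmod_add_power2: "(cmod (a + b))\<^sup>2 = (cmod a)\<^sup>2 + 2 * Re (cnj a * b) + (cmod b)\<^sup>2"
  unfolding cmod_power2 by (simp add: algebra_simps power2_eq_square)

lemma eq_of_real_if_norm_one_plus_ge: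
  fixes u :: complex
  assumes "cmod u \<le> r" "1 + r \<le> cmod (1 + u)"
  shows "u = of_real r"
proof -
  have "cmod (1 + u) \<le> 1 + cmod u" using norm_triangle_ineq[of 1 u] by simp
  then have ur: "cmod u = r" and eq: "cmod (1 + u) = 1 + cmod u" using assms by linarith+
  have "(cmod (1 + u))\<^sup>2 = 1 + 2 * Re u + (cmod u)\<^sup>2" using cmod_add_power2[of 1 u] by simp
  moreover have "(cmod (1 + u))\<^sup>2 = 1 + 2 * cmod u + (cmod u)\<^sup>2"
    unfolding eq by (simp add: power2_eq_square algebra_simps)
  ultimately have Re: "Re u = cmod u" by simp
  then have "Im u = 0" using cmod_power2[of u] by simp
  with Re ur show ?thesis by (simp add: complex_eq_iff)
qed

lemma sphere_subset_image_if_sup_norm_r_ge: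
  assumes r: "0 < r" and h: "continuous_on (cball 0 r) h"
    and le: "\<And>z. z \<in> cball 0 r \<Longrightarrow> cmod (h z) \<le> r"
    and ge: "\<And>e. cmod e = 1 \<Longrightarrow> 1 + r \<le> sup_norm_r r (\<lambda>z. 1 + cnj e * h z)"
  shows "sphere 0 r \<subseteq> h ` cball 0 r"
proof
  fix y :: complex assume "y \<in> sphere 0 r"
  define e where "e = y / r"
  have e: "cmod e = 1" and y: "y = r * e"
    using r \<open>y \<in> sphere 0 r\<close> by (simp_all add: e_def norm_divide)
  have cont: "continuous_on (cball 0 r) (\<lambda>z. 1 + cnj e * h z)"
    by (intro continuous_intros h)
  obtain w where w: "w \<in> cball 0 r"
      "cmod (1 + cnj e * h w) = sup_norm_r r (\<lambda>z. 1 + cnj e * h z)"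
    by (rule sup_norm_r_attained[OF less_imp_le[OF r] cont])
  have "cnj e * h w = r"
    using e le[OF w(1)] ge[OF e] w(2)
    by (intro eq_of_real_if_norm_one_plus_ge) (simp_all add: norm_mult)
  moreover have "e * cnj e = 1" using e complex_norm_square[of e] by simp
  ultimately have "h w = r * e" by (metis mult.assoc mult.commute mult_1)
  with w(1) y show "y \<in> h ` cball 0 r" by (metis image_eqI)
qed

lemma const_in_hol_disc [simp]: "(\<lambda>_. c) \<in> hol_disc"
  by (simp add: hol_disc_def)

lemma id_in_hol_disc [simp]: "(\<lambda>w. w) \<in> hol_disc"
  by (simp add: hol_disc_def)

text \<open>For \<open>|p| = r\<close>, the average of \<open>1\<close> and the linear map \<open>w \<mapsto> cnj p \<cdot> w / r\<^sup>2\<close>, which is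
  bounded by \<open>1\<close> on \<open>cball 0 r\<close> and equals \<open>1\<close> only at \<open>p\<close>.\<close>
definition peak_kernel :: "real \<Rightarrow> complex \<Rightarrow> complex \<Rightarrow> complex" where
  "peak_kernel r p w = (1 + cnj p * w / (of_real r)\<^sup>2) / 2"

lemma peak_kernel_affine:
  "0 < r \<Longrightarrow> peak_kernel r p = (\<lambda>w. 1 / 2 * 1 + cnj p / (2 * (of_real r)\<^sup>2) * w)"
  by (auto simp: peak_kernel_def field_simps)

lemma peak_kernel_in_hol_disc: "0 < r \<Longrightarrow> peak_kernel r p \<in> hol_disc"
  by (simp add: peak_kernel_affine hol_disc_def holomorphic_intros)

lemma peak_kernel_self:
  assumes "0 < r" "cmod p = r"
  shows "peak_kernel r p p = 1"
proof -
  have "cnj p * p = (of_real r)\<^sup>2"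
    using assms(2) complex_norm_square[of p] by (simp add: mult.commute)
  then show ?thesis using assms(1) by (simp add: peak_kernel_def)
qed

lemma peak_kernel_bounds:
  assumes r: "0 < r" and p: "cmod p = r" and z: "cmod z \<le> r"
  shows "cmod (peak_kernel r p z - 1) = cmod (z - p) / (2 * r)"
    and "(cmod (peak_kernel r p z))\<^sup>2 \<le> 1 - (cmod (z - p) / (2 * r))\<^sup>2"
proof -
  define w where "w = cnj p * z / (of_real r)\<^sup>2"
  have K: "peak_kernel r p z = (1 + w) / 2" by (simp add: peak_kernel_def w_def)
  have "cnj p * p = (of_real r)\<^sup>2" using p complex_norm_square[of p] by (simp add: mult.commute)
  then have "1 - w = cnj p * (p - z) / (of_real r)\<^sup>2" using r by (simp add: w_def field_simps)
  then have "cmod (1 - w) = cmod (z - p) / r"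
    using r p by (simp add: norm_mult norm_divide norm_power norm_minus_commute power2_eq_square)
  then have \<delta>: "cmod (z - p) / (2 * r) = cmod (1 - w) / 2" by simp
  have "cmod w = cmod z / r"
    using r p by (simp add: w_def norm_mult norm_divide norm_power power2_eq_square)
  then have w1: "(cmod w)\<^sup>2 \<le> 1" using r z by (simp add: power_le_one)
  have "peak_kernel r p z - 1 = - ((1 - w) / 2)" by (simp add: K field_simps)
  then show "cmod (peak_kernel r p z - 1) = cmod (z - p) / (2 * r)"
    unfolding \<delta> by (simp only: norm_minus_cancel norm_divide) simp
  have "(cmod (1 + w))\<^sup>2 + (cmod (1 - w))\<^sup>2 = 2 + 2 * (cmod w)\<^sup>2"
    using cmod_add_power2[of 1 w] cmod_add_power2[of 1 "- w"] by simp
  with w1 show "(cmod (peak_kernel r p z))\<^sup>2 \<le> 1 - (cmod (z - p) / (2 * r))\<^sup>2"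
    unfolding \<delta> K by (simp add: norm_divide power_divide)
qed

lemma Re_cnj_mult_le:
  fixes y c k :: complex
  assumes k1: "cmod (k - 1) \<le> t" and k_le: "cmod k \<le> 1" and yc: "cmod (y - c) \<le> A * t"
  shows "Re (cnj y * k) \<le> Re c + (cmod c + A) * t"
proof -
  have "Re (cnj c * (k - 1)) \<le> cmod c * cmod (k - 1)"
    using complex_Re_le_cmod[of "cnj c * (k - 1)"] by (simp only: norm_mult complex_mod_cnj)
  also have "\<dots> \<le> cmod c * t" using k1 by (simp add: mult_left_mono)
  finally have re1: "Re (cnj c * (k - 1)) \<le> cmod c * t" .
  have "Re (cnj (y - c) * k) \<le> cmod (y - c) * cmod k"
    using complex_Re_le_cmod[of "cnj (y - c) * k"] by (simp only: norm_mult complex_mod_cnj)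
  also have "\<dots> \<le> A * t * 1"
    using yc k_le by (intro mult_mono) (auto intro: order_trans[OF norm_ge_zero])
  finally have re2: "Re (cnj (y - c) * k) \<le> A * t" by simp
  have "cnj y * k = cnj c + cnj c * (k - 1) + cnj (y - c) * k" by (simp add: algebra_simps)
  then have "Re (cnj y * k) = Re c + Re (cnj c * (k - 1)) + Re (cnj (y - c) * k)" by simp
  with re1 re2 show ?thesis by (simp add: distrib_right)
qed

lemma norm_add_mult_power2_le:
  fixes y c k :: complex
  assumes M: "0 \<le> M" and k1: "cmod (k - 1) \<le> t" and k2: "(cmod k)\<^sup>2 \<le> 1 - t\<^sup>2"
    and y: "cmod y \<le> B" and yc: "cmod (y - c) \<le> A * t"
  shows "(cmod (y + of_real M * k))\<^sup>2 \<le> (M + Re c)\<^sup>2 + B\<^sup>2 + (cmod c + A)\<^sup>2"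
proof -
  have "(cmod k)\<^sup>2 \<le> 1\<^sup>2" using k2 zero_le_power2[of t] by (simp only: power_one)
  then have k_le: "cmod k \<le> 1" by (rule power2_le_imp_le) simp
  have re: "Re (cnj y * k) \<le> Re c + (cmod c + A) * t" by (rule Re_cnj_mult_le[OF k1 k_le yc])
  have "(cmod (y + of_real M * k))\<^sup>2 = (cmod y)\<^sup>2 + 2 * M * Re (cnj y * k) + M\<^sup>2 * (cmod k)\<^sup>2"
    using cmod_add_power2[of y "of_real M * k"] M
    by (simp add: norm_mult power_mult_distrib algebra_simps)
  also have "\<dots> \<le> B\<^sup>2 + 2 * M * (Re c + (cmod c + A) * t) + M\<^sup>2 * (1 - t\<^sup>2)"
  proof -
    have "(cmod y)\<^sup>2 \<le> B\<^sup>2" using y by (simp add: power_mono)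
    moreover have "2 * M * Re (cnj y * k) \<le> 2 * M * (Re c + (cmod c + A) * t)"
      using re M by (simp add: mult_left_mono)
    moreover have "M\<^sup>2 * (cmod k)\<^sup>2 \<le> M\<^sup>2 * (1 - t\<^sup>2)" using k2 by (simp add: mult_left_mono)
    ultimately show ?thesis by linarith
  qed
  also have "\<dots> \<le> (M + Re c)\<^sup>2 + B\<^sup>2 + (cmod c + A)\<^sup>2"
  proof -
    have "0 \<le> (M * t - (cmod c + A))\<^sup>2 + (Re c)\<^sup>2" by simp
    also have "\<dots> = (M + Re c)\<^sup>2 + B\<^sup>2 + (cmod c + A)\<^sup>2
        - (B\<^sup>2 + 2 * M * (Re c + (cmod c + A) * t) + M\<^sup>2 * (1 - t\<^sup>2))"
      by (simp add: power2_eq_square algebra_simps)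
    finally show ?thesis by simp
  qed
  finally show ?thesis .
qed

lemma norm_add_peak_kernel_power2_le:
  assumes f: "f holomorphic_on ball 0 1" and r: "0 < r" "r < 1" and p: "cmod p = r"
  shows "\<exists>C. \<forall>M e z. 0 \<le> M \<longrightarrow> cmod e = 1 \<longrightarrow> z \<in> cball 0 r \<longrightarrow>
    (cmod (f z + of_real M * e * peak_kernel r p z))\<^sup>2 \<le> (M + Re (cnj e * f p))\<^sup>2 + C"
proof -
  define B where "B = sup_norm_r r f"
  define L where "L = sup_norm_r r (deriv f)"
  have cont: "continuous_on (cball 0 r) f"
    using f r(2) by (rule continuous_on_cball_if_holomorphic_on_disc)
  have p_in: "p \<in> cball 0 r" using p by simp
  have lip: "cmod (f z - f p) \<le> L * cmod (z - p)" if "z \<in> cball 0 r" for z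
    unfolding L_def using f r(2) that p_in by (rule norm_diff_le_sup_norm_r_deriv)
  show ?thesis
  proof (intro exI allI impI)
    fix M :: real and e z :: complex
    assume M: "0 \<le> M" and e: "cmod e = 1" and z: "z \<in> cball 0 r"
    have "e * (cnj e * f z + of_real M * peak_kernel r p z)
        = (e * cnj e) * f z + of_real M * e * peak_kernel r p z"
      by (simp add: algebra_simps)
    also have "\<dots> = f z + of_real M * e * peak_kernel r p z"
      using e complex_norm_square[of e] by simp
    finally have eq: "cmod (f z + of_real M * e * peak_kernel r p z)
        = cmod (cnj e * f z + of_real M * peak_kernel r p z)"
      by (metis e norm_mult mult_1)
    have "cmod (cnj e * f z - cnj e * f p) = cmod (f z - f p)"
      using e by (simp add: right_diff_distrib[symmetric] norm_mult)
    also have "\<dots> \<le> L * cmod (z - p)" by (rule lip[OF z])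
    also have "\<dots> = 2 * r * L * (cmod (z - p) / (2 * r))" using r by simp
    finally have yc: "cmod (cnj e * f z - cnj e * f p) \<le> 2 * r * L * (cmod (z - p) / (2 * r))" .
    have y: "cmod (cnj e * f z) \<le> B"
      using e sup_norm_r_upper[OF cont z] by (simp add: norm_mult B_def)
    have "(cmod (cnj e * f z + of_real M * peak_kernel r p z))\<^sup>2
        \<le> (M + Re (cnj e * f p))\<^sup>2 + B\<^sup>2 + (cmod (cnj e * f p) + 2 * r * L)\<^sup>2"
      by (rule norm_add_mult_power2_le[OF M _ _ y yc])
        (use peak_kernel_bounds[OF r(1) p] z in simp_all)
    then show "(cmod (f z + of_real M * e * peak_kernel r p z))\<^sup>2
        \<le> (M + Re (cnj e * f p))\<^sup>2 + (B\<^sup>2 + (cmod (f p) + 2 * r * L)\<^sup>2)"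
      using e by (simp add: eq norm_mult add.assoc)
  qed
qed

lemma ex_shift_power2_gt:
  fixes x \<delta> C :: real
  assumes "0 < \<delta>"
  obtains M where "0 \<le> M" "0 \<le> x + \<delta> + M" "(M + x)\<^sup>2 + C < (x + \<delta> + M)\<^sup>2"
proof
  define M where "M = \<bar>x\<bar> + \<bar>C\<bar> / \<delta> + 1"
  have C: "0 \<le> \<bar>C\<bar> / \<delta>" using assms by (simp add: zero_le_divide_iff)
  then show "0 \<le> M" unfolding M_def using abs_ge_zero[of x] by linarith
  have Mx: "\<bar>C\<bar> / \<delta> + 1 \<le> M + x" unfolding M_def using abs_ge_minus_self[of x] by linarith
  then show "0 \<le> x + \<delta> + M" using C assms by linarith
  have "\<bar>C\<bar> + \<delta> = (\<bar>C\<bar> / \<delta> + 1) * \<delta>" using assms by (simp add: distrib_right)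
  also have "\<dots> \<le> (M + x) * \<delta>" using Mx assms by (intro mult_right_mono) auto
  finally have "\<bar>C\<bar> + \<delta> \<le> (M + x) * \<delta>" .
  moreover have "(x + \<delta> + M)\<^sup>2 = (M + x)\<^sup>2 + 2 * ((M + x) * \<delta>) + \<delta>\<^sup>2"
    by (simp add: power2_eq_square algebra_simps)
  moreover have "0 < \<delta>\<^sup>2" using assms by simp
  ultimately show "(M + x)\<^sup>2 + C < (x + \<delta> + M)\<^sup>2"
    using assms abs_ge_self[of C] by linarith
qed

text \<open>Testing \<open>\<phi>\<close> on \<open>f + M e K\<close>, with \<open>K\<close> the peak kernel at \<open>p\<close> and \<open>M \<rightarrow> \<infinity>\<close>, shows that
  \<open>\<phi> f - f p\<close> has no component in any direction \<open>e\<close>.\<close>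
lemma contractive_functional_eq_evaluation:
  fixes \<phi> :: "(complex \<Rightarrow> complex) \<Rightarrow> complex"
  assumes r: "0 < r" "r < 1" and p: "cmod p = r"
    and lin: "\<And>f g a b. f \<in> hol_disc \<Longrightarrow> g \<in> hol_disc \<Longrightarrow> \<phi> (\<lambda>w. a * f w + b * g w) = a * \<phi> f + b * \<phi> g"
    and bound: "\<And>f. f \<in> hol_disc \<Longrightarrow> cmod (\<phi> f) \<le> sup_norm_r r f"
    and one: "\<phi> (\<lambda>_. 1) = 1" and id: "\<phi> (\<lambda>w. w) = p"
    and f: "f \<in> hol_disc"
  shows "\<phi> f = f p"
proof (rule ccontr)
  define d where "d = \<phi> f - f p"
  define e where "e = d / cmod d"
  define K where "K = peak_kernel r p"
  define x where "x = Re (cnj e * f p)"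
  assume "\<phi> f \<noteq> f p"
  then have d: "0 < cmod d" by (simp add: d_def)
  then have e: "cmod e = 1" and ed: "cnj e * d = cmod d" and ee: "cnj e * e = 1"
    using complex_norm_square[of d]
    by (simp_all add: e_def norm_divide field_simps power2_eq_square mult.commute)
  have K_hol: "K \<in> hol_disc" unfolding K_def using r(1) by (rule peak_kernel_in_hol_disc)
  have "\<phi> K = 1 / 2 * \<phi> (\<lambda>_. 1) + cnj p / (2 * (of_real r)\<^sup>2) * \<phi> (\<lambda>w. w)"
    unfolding K_def peak_kernel_affine[OF r(1)] by (rule lin) simp_all
  also have "\<dots> = peak_kernel r p p" by (simp add: one id peak_kernel_affine[OF r(1)])
  finally have K1: "\<phi> K = 1" using peak_kernel_self[OF r(1) p] by simp
  have f_hol: "f holomorphic_on ball 0 1" using f by (simp add: hol_disc_def)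
  obtain C where C: "\<forall>M e z. 0 \<le> M \<longrightarrow> cmod e = 1 \<longrightarrow> z \<in> cball 0 r \<longrightarrow>
      (cmod (f z + of_real M * e * peak_kernel r p z))\<^sup>2 \<le> (M + Re (cnj e * f p))\<^sup>2 + C"
    using norm_add_peak_kernel_power2_le[OF f_hol r p] by (elim exE)
  obtain M where M: "0 \<le> M" "0 \<le> x + cmod d + M" "(M + x)\<^sup>2 + C < (x + cmod d + M)\<^sup>2"
    using ex_shift_power2_gt[OF d] by blast
  define F where "F = (\<lambda>w. 1 * f w + (of_real M * e) * K w)"
  have F: "F \<in> hol_disc" using f K_hol by (simp add: F_def hol_disc_def holomorphic_intros)
  have "\<phi> F = \<phi> f + of_real M * e" unfolding F_def lin[OF f K_hol] K1 by simp
  then have "cnj e * \<phi> F = cnj e * f p + cnj e * d + of_real M * (cnj e * e)"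
    by (simp add: d_def algebra_simps)
  then have "Re (cnj e * \<phi> F) = x + cmod d + M" using ed ee by (simp add: x_def)
  then have "x + cmod d + M \<le> cmod (\<phi> F)"
    using complex_Re_le_cmod[of "cnj e * \<phi> F"] e by (simp add: norm_mult)
  moreover have cont: "continuous_on (cball 0 r) F"
    using F r(2) by (simp add: hol_disc_def continuous_on_cball_if_holomorphic_on_disc)
  obtain z where z: "z \<in> cball 0 r" "cmod (F z) = sup_norm_r r F"
    by (rule sup_norm_r_attained[OF less_imp_le[OF r(1)] cont])
  moreover have "cmod (\<phi> F) \<le> sup_norm_r r F" using F by (rule bound)
  ultimately have "(x + cmod d + M)\<^sup>2 \<le> (cmod (F z))\<^sup>2"
    using M(2) by (intro power_mono) auto
  also have "\<dots> \<le> (M + x)\<^sup>2 + C" using C M(1) e z(1) by (simp add: F_def K_def x_def)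
  finally show False using M(3) by simp
qed

locale two_radii_isometry =
  fixes r1 r2 :: real and T :: "(complex \<Rightarrow> complex) \<Rightarrow> complex \<Rightarrow> complex"
  assumes radii: "0 < r1" "r1 < r2" "r2 < 1"
    and linear: "hol_linear T"
    and isometric_r1: "\<And>f. f \<in> hol_disc \<Longrightarrow> sup_norm_r r1 (T f) = sup_norm_r r1 f"
    and isometric_r2: "\<And>f. f \<in> hol_disc \<Longrightarrow> sup_norm_r r2 (T f) = sup_norm_r r2 f"
begin

lemma T_holomorphic: "f \<in> hol_disc \<Longrightarrow> T f holomorphic_on ball 0 1"
  using linear by (auto simp: hol_linear_def hol_disc_def)

lemma T_lincomb:
  "f \<in> hol_disc \<Longrightarrow> g \<in> hol_disc \<Longrightarrow> z \<in> ball 0 1 \<Longrightarrow>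
    T (\<lambda>w. a * f w + b * g w) z = a * T f z + b * T g z"
  using linear by (simp add: hol_linear_def)

lemma T_affine: "z \<in> ball 0 1 \<Longrightarrow> T (\<lambda>w. a + b * w) z = a * T (\<lambda>_. 1) z + b * T (\<lambda>w. w) z"
  using T_lincomb[of "\<lambda>_. 1" "\<lambda>w. w" z a b] by simp

lemma T_norm_le_sup_norm_r:
  assumes "f \<in> hol_disc" "r = r1 \<or> r = r2" "z \<in> cball 0 r"
  shows "cmod (T f z) \<le> sup_norm_r r f"
proof -
  have "cmod (T f z) \<le> sup_norm_r r (T f)"
    using assms radii
    by (intro sup_norm_r_upper continuous_on_cball_if_holomorphic_on_disc T_holomorphic) auto
  also have "\<dots> = sup_norm_r r f" using assms isometric_r1 isometric_r2 by auto
  finally show ?thesis .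
qed

lemma T_id_norm_le: "r = r1 \<or> r = r2 \<Longrightarrow> z \<in> cball 0 r \<Longrightarrow> cmod (T (\<lambda>w. w) z) \<le> r"
  using T_norm_le_sup_norm_r[of "\<lambda>w. w" r z] sup_norm_r_id_le[of r] radii by fastforce

lemma T_one_eq_unimodular_constant:
  obtains \<alpha> where "cmod \<alpha> = 1" "\<And>z. z \<in> ball 0 1 \<Longrightarrow> T (\<lambda>_. 1) z = \<alpha>"
proof -
  have norms: "sup_norm_r r1 (T (\<lambda>_. 1)) = 1" "sup_norm_r r2 (T (\<lambda>_. 1)) = 1"
    using radii isometric_r1 isometric_r2 by (simp_all add: sup_norm_r_const)
  have "T (\<lambda>_. 1) constant_on ball 0 1"
    using radii norms
    by (intro constant_on_disc_if_sup_norm_r_eq[of _ r1 r2] T_holomorphic) simp_all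
  then obtain \<alpha> where \<alpha>: "\<And>z. z \<in> ball 0 1 \<Longrightarrow> T (\<lambda>_. 1) z = \<alpha>"
    by (auto simp: constant_on_def)
  have "sup_norm_r r1 (T (\<lambda>_. 1)) = sup_norm_r r1 (\<lambda>_. \<alpha>)"
    using radii \<alpha> by (intro sup_norm_r_cong_norm) auto
  then have "cmod \<alpha> = 1" using norms radii by (simp add: sup_norm_r_const)
  with \<alpha> that show ?thesis by blast
qed

context
  fixes \<alpha> :: complex
  assumes \<alpha>: "cmod \<alpha> = 1" "\<And>z. z \<in> ball 0 1 \<Longrightarrow> T (\<lambda>_. 1) z = \<alpha>"
begin

lemma sphere_subset_T_id_image:
  shows "sphere 0 r1 \<subseteq> (\<lambda>z. cnj \<alpha> * T (\<lambda>w. w) z) ` cball 0 r1"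
proof (rule sphere_subset_image_if_sup_norm_r_ge)
  have \<alpha>\<alpha>: "cnj \<alpha> * \<alpha> = 1" using \<alpha>(1) complex_norm_square[of \<alpha>] by (simp add: mult.commute)
  show "0 < r1" using radii by simp
  show "continuous_on (cball 0 r1) (\<lambda>z. cnj \<alpha> * T (\<lambda>w. w) z)"
    using radii
    by (intro continuous_intros continuous_on_cball_if_holomorphic_on_disc T_holomorphic) auto
  show "cmod (cnj \<alpha> * T (\<lambda>w. w) z) \<le> r1" if "z \<in> cball 0 r1" for z
    using T_id_norm_le[of r1 z] that \<alpha>(1) by (simp add: norm_mult)
  fix e :: complex assume e: "cmod e = 1"
  have ee: "cnj e * e = 1" using e complex_norm_square[of e] by (simp add: mult.commute)
  have "1 + r1 = cmod (complex_of_real (1 + r1))"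
    using radii by (simp only: norm_of_real)
  also have "\<dots> = cmod (1 + cnj e * (r1 * e))"
    by (simp add: mult.left_commute[of _ "of_real r1"] ee)
  also have "\<dots> \<le> sup_norm_r r1 (\<lambda>w. 1 + cnj e * w)"
    using e radii by (intro sup_norm_r_upper continuous_intros) (simp add: norm_mult)
  also have "\<dots> = sup_norm_r r1 (T (\<lambda>w. 1 + cnj e * w))"
    by (rule isometric_r1[symmetric]) (simp add: hol_disc_def holomorphic_intros)
  also have "\<dots> = sup_norm_r r1 (\<lambda>z. 1 + cnj e * (cnj \<alpha> * T (\<lambda>w. w) z))"
  proof (rule sup_norm_r_cong_norm)
    fix z :: complex assume "z \<in> cball 0 r1"
    then have z: "z \<in> ball 0 1" using radii by simp
    have "cmod (T (\<lambda>w. 1 + cnj e * w) z) = cmod (cnj \<alpha> * (\<alpha> + cnj e * T (\<lambda>w. w) z))"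
      using T_affine[OF z, of 1 "cnj e"] \<alpha> z by (simp add: norm_mult)
    also have "cnj \<alpha> * (\<alpha> + cnj e * T (\<lambda>w. w) z) = cnj \<alpha> * \<alpha> + cnj e * (cnj \<alpha> * T (\<lambda>w. w) z)"
      by (simp add: algebra_simps)
    finally show "cmod (T (\<lambda>w. 1 + cnj e * w) z) = cmod (1 + cnj e * (cnj \<alpha> * T (\<lambda>w. w) z))"
      using \<alpha>\<alpha> by simp
  qed
  finally show "1 + r1 \<le> sup_norm_r r1 (\<lambda>z. 1 + cnj e * (cnj \<alpha> * T (\<lambda>w. w) z))" by simp
qed

lemma T_id_eq_rotation:
  obtains \<beta> where "cmod \<beta> = 1" "\<And>z. z \<in> ball 0 r2 \<Longrightarrow> T (\<lambda>w. w) z = \<alpha> * (\<beta> * z)"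
proof -
  define h where "h = (\<lambda>z. cnj \<alpha> * T (\<lambda>w. w) z)"
  have "h holomorphic_on ball 0 1"
    unfolding h_def by (intro holomorphic_intros T_holomorphic id_in_hol_disc)
  then have hol: "h holomorphic_on ball 0 r2" by (rule holomorphic_on_subset) (use radii in auto)
  have into: "h ` ball 0 r2 \<subseteq> cball 0 r2"
    using T_id_norm_le[of r2] \<alpha>(1) by (auto simp: h_def norm_mult)
  note sphere = sphere_subset_T_id_image[folded h_def]
  obtain b where b: "cmod b = 1" "\<And>z. z \<in> ball 0 r2 \<Longrightarrow> h z = b * z"
    by (rule holomorphic_map_rotation_if_sphere_in_image[OF hol into _ _ sphere]) (use radii in simp_all)
  show ?thesis
  proof (rule that[OF b(1)])
    fix z :: complex assume "z \<in> ball 0 r2"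
    have "T (\<lambda>w. w) z = (\<alpha> * cnj \<alpha>) * T (\<lambda>w. w) z" using \<alpha>(1) complex_norm_square[of \<alpha>] by simp
    also have "\<dots> = \<alpha> * h z" by (simp add: h_def)
    finally show "T (\<lambda>w. w) z = \<alpha> * (b * z)" using b(2)[OF \<open>z \<in> ball 0 r2\<close>] by simp
  qed
qed

context
  fixes \<beta> :: complex
  assumes \<beta>: "cmod \<beta> = 1" "\<And>z. z \<in> ball 0 r2 \<Longrightarrow> T (\<lambda>w. w) z = \<alpha> * (\<beta> * z)"
begin

lemma T_eq_on_sphere:
  assumes f: "f \<in> hol_disc" and z: "cmod z = r1"
  shows "T f z = \<alpha> * f (\<beta> * z)"
proof -
  have \<alpha>\<alpha>: "cnj \<alpha> * \<alpha> = 1" using \<alpha>(1) complex_norm_square[of \<alpha>] by (simp add: mult.commute)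
  have z_in: "z \<in> ball 0 1" "z \<in> ball 0 r2" "z \<in> cball 0 r1" using z radii by auto
  have "cnj \<alpha> * T f z = f (\<beta> * z)"
  proof (rule contractive_functional_eq_evaluation[where \<phi> = "\<lambda>g. cnj \<alpha> * T g z" and p = "\<beta> * z"])
    show "0 < r1" "r1 < 1" using radii by simp_all
    show "cmod (\<beta> * z) = r1" using \<beta>(1) z by (simp add: norm_mult)
    show "cnj \<alpha> * T (\<lambda>w. a * g w + b * h w) z = a * (cnj \<alpha> * T g z) + b * (cnj \<alpha> * T h z)"
      if "g \<in> hol_disc" "h \<in> hol_disc" for g h a b
      using T_lincomb[OF that z_in(1)] by (simp add: algebra_simps)
    show "cmod (cnj \<alpha> * T g z) \<le> sup_norm_r r1 g" if "g \<in> hol_disc" for g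
      using T_norm_le_sup_norm_r[OF that _ z_in(3)] \<alpha>(1) by (simp add: norm_mult)
    show "cnj \<alpha> * T (\<lambda>_. 1) z = 1" using \<alpha>(2)[OF z_in(1)] \<alpha>\<alpha> by simp
    show "cnj \<alpha> * T (\<lambda>w. w) z = \<beta> * z"
      using \<beta>(2)[OF z_in(2)] \<alpha>\<alpha> by (simp add: mult.assoc[symmetric])
  qed (rule f)
  then show ?thesis using \<alpha>\<alpha> by (metis mult.assoc mult.commute mult_1)
qed

lemma T_eq_rotation:
  assumes f: "f \<in> hol_disc" and z: "z \<in> ball 0 1"
  shows "T f z = \<alpha> * f (\<beta> * z)"
proof (rule holomorphic_eq_on_disc_if_eq_on_sphere[where f = "T f" and g = "\<lambda>z. \<alpha> * f (\<beta> * z)"])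
  show "T f holomorphic_on ball 0 1" using f by (rule T_holomorphic)
  show "(\<lambda>z. \<alpha> * f (\<beta> * z)) holomorphic_on ball 0 1"
    using f \<beta>(1)
    by (intro holomorphic_intros holomorphic_on_disc_compose_mult) (simp_all add: hol_disc_def)
  show "T f w = \<alpha> * f (\<beta> * w)" if "cmod w = r1" for w
    using T_eq_on_sphere[OF f that] .
qed (use radii z in auto)

end

end

end

theorem theorem2p1:
  fixes r1 r2 :: real
    and T :: "(complex \<Rightarrow> complex) \<Rightarrow> (complex \<Rightarrow> complex)"
  assumes "0 < r1" and "r1 < r2" and "r2 < 1"
    and "hol_linear T" and "hol_continuous T"
    and "\<And>f. f \<in> hol_disc \<Longrightarrow> sup_norm_r r1 (T f) = sup_norm_r r1 f"
    and "\<And>f. f \<in> hol_disc \<Longrightarrow> sup_norm_r r2 (T f) = sup_norm_r r2 f"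
  shows "\<exists>\<alpha> \<beta> :: complex. cmod \<alpha> = 1 \<and> cmod \<beta> = 1 \<and>
           (\<forall>f\<in>hol_disc. \<forall>z\<in>ball 0 1. T f z = \<alpha> * f (\<beta> * z))"
proof -
  interpret two_radii_isometry r1 r2 T
    using assms(1-4,6,7) by unfold_locales
  obtain \<alpha> where \<alpha>: "cmod \<alpha> = 1" "\<And>z. z \<in> ball 0 1 \<Longrightarrow> T (\<lambda>_. 1) z = \<alpha>"
    using T_one_eq_unimodular_constant by blast
  obtain \<beta> where \<beta>: "cmod \<beta> = 1" "\<And>z. z \<in> ball 0 r2 \<Longrightarrow> T (\<lambda>w. w) z = \<alpha> * (\<beta> * z)"
    using T_id_eq_rotation[OF \<alpha>] by blast
  show ?thesis
    using \<alpha>(1) \<beta>(1) T_eq_rotation[OF \<alpha> \<beta>] by blast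
qed

end
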